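(* On any generalized Kac algebra $(M,\Delta,S,\phi)$ there is a unique normalized Haar trace, i.e. a unique faithful trace $\psi$ on $M$ such that $(\mathrm{id}\otimes\psi)\Delta=(\varepsilon_t\otimes\psi)\Delta$, $\psi\circ S=\psi$ and $(\mathrm{id}\otimes\psi)(\Delta(1))=1$, where $\varepsilon_t=\mu(\mathrm{id}\otimes S)\Delta$.
   Context: All algebras are finite-dimensional over $\mathbb{C}$; $\varsigma$ denotes the flip and $\mu(x\otimes y)=xy$. A generalized Kac algebra is a quadruple $(M,\Delta,S,\phi)$ where $M$ is a finite-dimensional $C^*$-algebra; $\Delta:M\to M\otimes M$ is an injective, not necessarily unital, $*$-homomorphism with $(\Delta\otimes\mathrm{id})\Delta=(\mathrm{id}\otimes\Delta)\Delta$; $S:M\to M$ is a linear, unital, antimultiplicative, $*$-preserving bijection with $S^2=\mathrm{id}$ and $(S\otimes S)\circ\Delta=\varsigma\circ\Delta\circ S$; and $\phi$ is a faithful trace on $M$ with $\phi\circ S=\phi$ and $(\mathrm{id}\otimes\phi)[(1\otimes y)\Delta(x)]=S[(\mathrm{id}\otimes\phi)(\Delta(y)(1\otimes x))]$ for all $x,y\in M$. *)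

theory Defs
  imports Complex_Main
begin

text \<open>
A finite-dimensional complex algebra M is represented in coordinates with respect to a
basis indexed by a finite type 'i: elements of M are functions 'i => complex.
Then M (x) M is represented by functions ('i * 'i) => complex (basis e_a (x) e_b),
and M (x) M (x) M by functions on triples.  All algebraic operations on tensor
products are induced from the operations on M via the basis.
\<close>

definition bvec :: "'i \<Rightarrow> 'i \<Rightarrow> complex" where
  "bvec i = (\<lambda>j. if j = i then 1 else 0)"

definition vadd :: "('i \<Rightarrow> complex) \<Rightarrow> ('i \<Rightarrow> complex) \<Rightarrow> ('i \<Rightarrow> complex)" where
  "vadd x y = (\<lambda>i. x i + y i)"

definition vscale :: "complex \<Rightarrow> ('i \<Rightarrow> complex) \<Rightarrow> ('i \<Rightarrow> complex)" where
  "vscale c x = (\<lambda>i. c * x i)"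

definition vzero :: "'i \<Rightarrow> complex" where
  "vzero = (\<lambda>_. 0)"

definition clin :: "(('a \<Rightarrow> complex) \<Rightarrow> ('b \<Rightarrow> complex)) \<Rightarrow> bool" where
  "clin f \<longleftrightarrow> (\<forall>x y c. f (vadd x y) = vadd (f x) (f y) \<and> f (vscale c x) = vscale c (f x))"

definition clin_fun :: "(('a \<Rightarrow> complex) \<Rightarrow> complex) \<Rightarrow> bool" where
  "clin_fun f \<longleftrightarrow> (\<forall>x y c. f (vadd x y) = f x + f y \<and> f (vscale c x) = c * f x)"

definition antilin :: "(('a \<Rightarrow> complex) \<Rightarrow> ('b \<Rightarrow> complex)) \<Rightarrow> bool" where
  "antilin f \<longleftrightarrow> (\<forall>x y c. f (vadd x y) = vadd (f x) (f y) \<and> f (vscale c x) = vscale (cnj c) (f x))"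

definition bilin :: "(('a \<Rightarrow> complex) \<Rightarrow> ('a \<Rightarrow> complex) \<Rightarrow> ('a \<Rightarrow> complex)) \<Rightarrow> bool" where
  "bilin m \<longleftrightarrow> (\<forall>x. clin (m x)) \<and> (\<forall>y. clin (\<lambda>x. m x y))"

definition star_algebra ::
  "(('i \<Rightarrow> complex) \<Rightarrow> ('i \<Rightarrow> complex) \<Rightarrow> ('i \<Rightarrow> complex)) \<Rightarrow> ('i \<Rightarrow> complex)
   \<Rightarrow> (('i \<Rightarrow> complex) \<Rightarrow> ('i \<Rightarrow> complex)) \<Rightarrow> bool" where
  "star_algebra mul one st \<longleftrightarrow>
     bilin mul \<and>
     (\<forall>x y z. mul (mul x y) z = mul x (mul y z)) \<and>
     (\<forall>x. mul one x = x \<and> mul x one = x) \<and>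
     antilin st \<and>
     (\<forall>x. st (st x) = x) \<and>
     (\<forall>x y. st (mul x y) = mul (st y) (st x))"

text \<open>a C*-norm (completeness is automatic in finite dimension)\<close>
definition cstar_norm ::
  "(('i \<Rightarrow> complex) \<Rightarrow> ('i \<Rightarrow> complex) \<Rightarrow> ('i \<Rightarrow> complex))
   \<Rightarrow> (('i \<Rightarrow> complex) \<Rightarrow> ('i \<Rightarrow> complex)) \<Rightarrow> (('i \<Rightarrow> complex) \<Rightarrow> real) \<Rightarrow> bool" where
  "cstar_norm mul st N \<longleftrightarrow>
     (\<forall>x. N x \<ge> 0 \<and> (N x = 0 \<longleftrightarrow> x = vzero)) \<and>
     (\<forall>c x. N (vscale c x) = cmod c * N x) \<and>
     (\<forall>x y. N (vadd x y) \<le> N x + N y) \<and>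
     (\<forall>x y. N (mul x y) \<le> N x * N y) \<and>
     (\<forall>x. N (mul (st x) x) = (N x)\<^sup>2)"

definition fd_cstar_algebra ::
  "(('i::finite \<Rightarrow> complex) \<Rightarrow> ('i \<Rightarrow> complex) \<Rightarrow> ('i \<Rightarrow> complex)) \<Rightarrow> ('i \<Rightarrow> complex)
   \<Rightarrow> (('i \<Rightarrow> complex) \<Rightarrow> ('i \<Rightarrow> complex)) \<Rightarrow> bool" where
  "fd_cstar_algebra mul one st \<longleftrightarrow> star_algebra mul one st \<and> (\<exists>N. cstar_norm mul st N)"

definition tens :: "('a \<Rightarrow> complex) \<Rightarrow> ('b \<Rightarrow> complex) \<Rightarrow> ('a \<times> 'b \<Rightarrow> complex)" where
  "tens x y = (\<lambda>(a, b). x a * y b)"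

text \<open>f (x) g for linear maps f, g\<close>
definition tmap ::
  "(('a::finite \<Rightarrow> complex) \<Rightarrow> ('b \<Rightarrow> complex)) \<Rightarrow> (('c::finite \<Rightarrow> complex) \<Rightarrow> ('d \<Rightarrow> complex))
   \<Rightarrow> ('a \<times> 'c \<Rightarrow> complex) \<Rightarrow> ('b \<times> 'd \<Rightarrow> complex)" where
  "tmap f g X = (\<lambda>(j, l). \<Sum>i\<in>UNIV. \<Sum>k\<in>UNIV. X (i, k) * f (bvec i) j * g (bvec k) l)"

text \<open>product on M (x) M: (x (x) y)(x' (x) y') = x x' (x) y y'\<close>
definition tmul ::
  "(('a::finite \<Rightarrow> complex) \<Rightarrow> ('a \<Rightarrow> complex) \<Rightarrow> ('a \<Rightarrow> complex))
   \<Rightarrow> (('b::finite \<Rightarrow> complex) \<Rightarrow> ('b \<Rightarrow> complex) \<Rightarrow> ('b \<Rightarrow> complex))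
   \<Rightarrow> ('a \<times> 'b \<Rightarrow> complex) \<Rightarrow> ('a \<times> 'b \<Rightarrow> complex) \<Rightarrow> ('a \<times> 'b \<Rightarrow> complex)" where
  "tmul m n X Y = (\<lambda>(c, d). \<Sum>a\<in>UNIV. \<Sum>b\<in>UNIV. \<Sum>a'\<in>UNIV. \<Sum>b'\<in>UNIV.
      X (a, b) * Y (a', b') * m (bvec a) (bvec a') c * n (bvec b) (bvec b') d)"

text \<open>involution on M (x) M: (x (x) y)^* = x^* (x) y^* (antilinear extension)\<close>
definition tstar ::
  "(('a::finite \<Rightarrow> complex) \<Rightarrow> ('a \<Rightarrow> complex)) \<Rightarrow> (('b::finite \<Rightarrow> complex) \<Rightarrow> ('b \<Rightarrow> complex))
   \<Rightarrow> ('a \<times> 'b \<Rightarrow> complex) \<Rightarrow> ('a \<times> 'b \<Rightarrow> complex)" where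
  "tstar s t X = (\<lambda>(j, l). \<Sum>i\<in>UNIV. \<Sum>k\<in>UNIV. cnj (X (i, k)) * s (bvec i) j * t (bvec k) l)"

definition flip :: "('a \<times> 'b \<Rightarrow> complex) \<Rightarrow> ('b \<times> 'a \<Rightarrow> complex)" where
  "flip X = (\<lambda>(a, b). X (b, a))"

definition slice :: "(('b::finite \<Rightarrow> complex) \<Rightarrow> complex) \<Rightarrow> ('a \<times> 'b \<Rightarrow> complex) \<Rightarrow> ('a \<Rightarrow> complex)" where
  "slice phi X = (\<lambda>a. \<Sum>k\<in>UNIV. X (a, k) * phi (bvec k))"

definition mu ::
  "(('i::finite \<Rightarrow> complex) \<Rightarrow> ('i \<Rightarrow> complex) \<Rightarrow> ('i \<Rightarrow> complex)) \<Rightarrow> ('i \<times> 'i \<Rightarrow> complex) \<Rightarrow> ('i \<Rightarrow> complex)" where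
  "mu m X = (\<lambda>c. \<Sum>a\<in>UNIV. \<Sum>b\<in>UNIV. X (a, b) * m (bvec a) (bvec b) c)"

definition faithful_trace ::
  "(('i \<Rightarrow> complex) \<Rightarrow> ('i \<Rightarrow> complex) \<Rightarrow> ('i \<Rightarrow> complex)) \<Rightarrow> (('i \<Rightarrow> complex) \<Rightarrow> ('i \<Rightarrow> complex))
   \<Rightarrow> (('i \<Rightarrow> complex) \<Rightarrow> complex) \<Rightarrow> bool" where
  "faithful_trace mul st phi \<longleftrightarrow>
     clin_fun phi \<and>
     (\<forall>x y. phi (mul x y) = phi (mul y x)) \<and>
     (\<forall>x. Im (phi (mul (st x) x)) = 0 \<and> Re (phi (mul (st x) x)) \<ge> 0) \<and>
     (\<forall>x. phi (mul (st x) x) = 0 \<longrightarrow> x = vzero)"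

definition gen_kac_algebra ::
  "(('i::finite \<Rightarrow> complex) \<Rightarrow> ('i \<Rightarrow> complex) \<Rightarrow> ('i \<Rightarrow> complex)) \<Rightarrow> ('i \<Rightarrow> complex)
   \<Rightarrow> (('i \<Rightarrow> complex) \<Rightarrow> ('i \<Rightarrow> complex))
   \<Rightarrow> (('i \<Rightarrow> complex) \<Rightarrow> ('i \<times> 'i \<Rightarrow> complex))
   \<Rightarrow> (('i \<Rightarrow> complex) \<Rightarrow> ('i \<Rightarrow> complex))
   \<Rightarrow> (('i \<Rightarrow> complex) \<Rightarrow> complex) \<Rightarrow> bool" where
  "gen_kac_algebra mul one st Delta S phi \<longleftrightarrow>
     fd_cstar_algebra mul one st \<and>
     \<comment> \<open>Delta: injective, not necessarily unital *-homomorphism, coassociative\<close>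
     clin Delta \<and> inj Delta \<and>
     (\<forall>x y. Delta (mul x y) = tmul mul mul (Delta x) (Delta y)) \<and>
     (\<forall>x. Delta (st x) = tstar st st (Delta x)) \<and>
     (\<forall>x a b c. tmap Delta id (Delta x) ((a, b), c) = tmap id Delta (Delta x) (a, (b, c))) \<and>
     \<comment> \<open>antipode S\<close>
     clin S \<and> S one = one \<and>
     (\<forall>x y. S (mul x y) = mul (S y) (S x)) \<and>
     (\<forall>x. S (st x) = st (S x)) \<and>
     bij S \<and> (\<forall>x. S (S x) = x) \<and>
     (\<forall>x. tmap S S (Delta x) = flip (Delta (S x))) \<and>
     \<comment> \<open>faithful trace phi\<close>
     faithful_trace mul st phi \<and>
     (\<forall>x. phi (S x) = phi x) \<and>
     (\<forall>x y. slice phi (tmul mul mul (tens one y) (Delta x))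
            = S (slice phi (tmul mul mul (Delta y) (tens one x))))"

definition eps_t ::
  "(('i::finite \<Rightarrow> complex) \<Rightarrow> ('i \<Rightarrow> complex) \<Rightarrow> ('i \<Rightarrow> complex))
   \<Rightarrow> (('i \<Rightarrow> complex) \<Rightarrow> ('i \<times> 'i \<Rightarrow> complex))
   \<Rightarrow> (('i \<Rightarrow> complex) \<Rightarrow> ('i \<Rightarrow> complex)) \<Rightarrow> ('i \<Rightarrow> complex) \<Rightarrow> ('i \<Rightarrow> complex)" where
  "eps_t mul Delta S x = mu mul (tmap id S (Delta x))"

text \<open>normalized Haar trace; (eps_t (x) psi) = (id (x) psi) o (eps_t (x) id)\<close>
definition normalized_haar_trace ::
  "(('i::finite \<Rightarrow> complex) \<Rightarrow> ('i \<Rightarrow> complex) \<Rightarrow> ('i \<Rightarrow> complex)) \<Rightarrow> ('i \<Rightarrow> complex)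
   \<Rightarrow> (('i \<Rightarrow> complex) \<Rightarrow> ('i \<Rightarrow> complex))
   \<Rightarrow> (('i \<Rightarrow> complex) \<Rightarrow> ('i \<times> 'i \<Rightarrow> complex))
   \<Rightarrow> (('i \<Rightarrow> complex) \<Rightarrow> ('i \<Rightarrow> complex))
   \<Rightarrow> (('i \<Rightarrow> complex) \<Rightarrow> complex) \<Rightarrow> bool" where
  "normalized_haar_trace mul one st Delta S psi \<longleftrightarrow>
     faithful_trace mul st psi \<and>
     (\<forall>x. slice psi (Delta x) = slice psi (tmap (eps_t mul Delta S) id (Delta x))) \<and>
     (\<forall>x. psi (S x) = psi x) \<and>
     slice psi (Delta one) = one"

end

theory Submission
  imports Defs "HOL-Analysis.Finite_Cartesian_Product"
begin

text \<open>
  Let \<open>g = (id \<otimes> \<phi>)\<Delta>(1)\<close>. Strong invariance of \<open>\<phi>\<close> at \<open>y = 1\<close>, combined with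
  \<open>(S \<otimes> S)\<Delta> = \<sigma>\<Delta>S\<close>, gives \<open>\<phi>(g x) = (\<phi> \<otimes> \<phi>)(\<Delta> x)\<close>. Since \<open>\<phi> \<otimes> \<phi>\<close> is a faithful positive
  trace on \<open>M \<otimes> M\<close> (a Gram factorization writes \<open>(\<phi> \<otimes> \<phi>)(Y\<^sup>* Y)\<close> as a sum of terms
  \<open>\<phi>(c\<^sup>* c)\<close>) and \<open>\<Delta>\<close> is an injective *-homomorphism, \<open>g\<close> is central, self-adjoint, \<open>S\<close>-invariant
  and invertible. By faithfulness every functional is \<open>\<phi>(z \<cdot>)\<close>, with \<open>z\<close> central if it is a
  trace and \<open>S\<close>-invariant if it is; for such \<open>z\<close> the Haar condition is equivalent to \<open>\<Delta>(z) = \<Delta>(1)(1 \<otimes> z)\<close>,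
  and then normalization says exactly \<open>z g = 1\<close>. Coassociativity yields
  \<open>(id \<otimes> \<phi>)((1 \<otimes> g)\<Delta>(x)) = (id \<otimes> \<phi>)\<Delta>(x g)\<close>, hence \<open>\<Delta>(g) = \<Delta>(1)(1 \<otimes> g)\<close> and the same for
  \<open>g\<^sup>-\<^sup>1\<close>; so \<open>\<phi>(g\<^sup>-\<^sup>1 \<cdot>)\<close> is the unique normalized Haar trace.
\<close>

lemma sum_bvec_left' [simp]: "(\<Sum>i\<in>UNIV. bvec i (a::'a::finite) * f i) = (f a :: complex)"
  unfolding bvec_def by (simp add: eq_commute[of a] if_distrib[of "\<lambda>x. x * _"] cong: if_cong)

lemma sum_bvec_right' [simp]: "(\<Sum>i\<in>UNIV. f i * bvec i (a::'a::finite)) = (f a :: complex)"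
  unfolding bvec_def by (simp add: eq_commute[of a] if_distrib[of "\<lambda>x. _ * x"] cong: if_cong)

lemma sum_bvec_left [simp]: "(\<Sum>i\<in>UNIV. bvec (a::'a::finite) i * f i) = (f a :: complex)"
  unfolding bvec_def by (simp add: if_distrib[of "\<lambda>x. x * _"] cong: if_cong)

lemma sum_bvec_right [simp]: "(\<Sum>i\<in>UNIV. f i * bvec (a::'a::finite) i) = (f a :: complex)"
  unfolding bvec_def by (simp add: if_distrib[of "\<lambda>x. _ * x"] cong: if_cong)

lemma bvec_pair: "bvec (a, b) = tens (bvec a) (bvec b)"
  by (auto simp: bvec_def tens_def)

lemma tens_apply [simp]: "tens x y (a, b) = x a * y b"
  by (simp add: tens_def)

lemma eq_of_vadd_neg_eq_vzero: "vadd x (vscale (-1) y) = vzero \<Longrightarrow> x = y"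
  by (auto simp: vadd_def vscale_def vzero_def fun_eq_iff)

lemma clinI:
  "(\<And>x y. f (vadd x y) = vadd (f x) (f y)) \<Longrightarrow> (\<And>c x. f (vscale c x) = vscale c (f x)) \<Longrightarrow> clin f"
  by (simp add: clin_def)

lemma clin_add: "clin f \<Longrightarrow> f (vadd x y) = vadd (f x) (f y)"
  by (simp add: clin_def)

lemma clin_scale: "clin f \<Longrightarrow> f (vscale c x) = vscale c (f x)"
  by (simp add: clin_def)

lemma clin_zero: "clin f \<Longrightarrow> f vzero = vzero"
  using clin_scale[of f 0 vzero] by (simp add: vscale_def vzero_def)

lemma clin_fun_add: "clin_fun f \<Longrightarrow> f (vadd x y) = f x + f y"
  by (simp add: clin_fun_def)

lemma clin_fun_scale: "clin_fun f \<Longrightarrow> f (vscale c x) = c * f x"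
  by (simp add: clin_fun_def)

lemma clin_fun_zero: "clin_fun f \<Longrightarrow> f vzero = 0"
  using clin_fun_scale[of f 0 vzero] by (simp add: vscale_def vzero_def)

lemma clin_id: "clin (\<lambda>x. x)"
  by (simp add: clin_def)

lemma clin_comp: "clin f \<Longrightarrow> clin g \<Longrightarrow> clin (\<lambda>x. f (g x))"
  by (simp add: clin_def)

lemma clin_fun_comp: "clin_fun f \<Longrightarrow> clin g \<Longrightarrow> clin_fun (\<lambda>x. f (g x))"
  by (simp add: clin_def clin_fun_def)

lemma clin_fun_apply: "clin f \<Longrightarrow> clin_fun (\<lambda>x. f x a)"
  by (simp add: clin_def clin_fun_def vadd_def vscale_def)

lemma vadd_sum_insert:
  "finite A \<Longrightarrow> a \<notin> A \<Longrightarrow> (\<lambda>p. \<Sum>q\<in>insert a A. v q p) = vadd (v a) (\<lambda>p. \<Sum>q\<in>A. v q p)"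
  by (simp add: vadd_def)

lemma clin_sum:
  assumes f: "clin f" and "finite A"
  shows "f (\<lambda>p. \<Sum>q\<in>A. v q p) = (\<lambda>j. \<Sum>q\<in>A. f (v q) j)"
  using \<open>finite A\<close>
proof (induction A rule: finite_induct)
  case empty
  then show ?case using clin_zero[OF f] by (simp add: vzero_def)
next
  case (insert a A)
  then show ?case
    unfolding vadd_sum_insert[OF insert.hyps] by (simp add: clin_add[OF f])
qed

lemma clin_fun_sum:
  assumes f: "clin_fun f" and "finite A"
  shows "f (\<lambda>p. \<Sum>q\<in>A. v q p) = (\<Sum>q\<in>A. f (v q))"
  using \<open>finite A\<close>
proof (induction A rule: finite_induct)
  case empty
  then show ?case using clin_fun_zero[OF f] by (simp add: vzero_def)
next
  case (insert a A)
  then show ?case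
    unfolding vadd_sum_insert[OF insert.hyps] by (simp add: clin_fun_add[OF f])
qed

lemma antilin_add: "antilin f \<Longrightarrow> f (vadd x y) = vadd (f x) (f y)"
  by (simp add: antilin_def)

lemma antilin_scale: "antilin f \<Longrightarrow> f (vscale c x) = vscale (cnj c) (f x)"
  by (simp add: antilin_def)

lemma antilin_zero: "antilin f \<Longrightarrow> f vzero = vzero"
  using antilin_scale[of f 0 vzero] by (simp add: vscale_def vzero_def)

lemma antilin_sum:
  assumes f: "antilin f" and "finite A"
  shows "f (\<lambda>p. \<Sum>q\<in>A. v q p) = (\<lambda>j. \<Sum>q\<in>A. f (v q) j)"
  using \<open>finite A\<close>
proof (induction A rule: finite_induct)
  case empty
  then show ?case using antilin_zero[OF f] by (simp add: vzero_def)
next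
  case (insert a A)
  then show ?case
    unfolding vadd_sum_insert[OF insert.hyps] by (simp add: antilin_add[OF f])
qed

lemma vec_expand: "x = (\<lambda>j. \<Sum>i\<in>UNIV. vscale (x i) (bvec i) j)" for x :: "'a::finite \<Rightarrow> complex"
  by (simp add: vscale_def)

lemma clin_expand:
  fixes f :: "('a::finite \<Rightarrow> complex) \<Rightarrow> ('b \<Rightarrow> complex)"
  assumes "clin f" shows "f x j = (\<Sum>i\<in>UNIV. x i * f (bvec i) j)"
proof -
  have "f x = f (\<lambda>j. \<Sum>i\<in>UNIV. vscale (x i) (bvec i) j)"
    by (rule arg_cong[OF vec_expand])
  also have "\<dots> = (\<lambda>j. \<Sum>i\<in>UNIV. f (vscale (x i) (bvec i)) j)"
    by (rule clin_sum[OF assms finite])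
  finally show ?thesis
    by (simp add: clin_scale[OF assms]) (simp add: vscale_def)
qed

lemma clin_fun_expand:
  fixes f :: "('a::finite \<Rightarrow> complex) \<Rightarrow> complex"
  assumes "clin_fun f" shows "f x = (\<Sum>i\<in>UNIV. x i * f (bvec i))"
proof -
  have "f x = f (\<lambda>j. \<Sum>i\<in>UNIV. vscale (x i) (bvec i) j)"
    by (rule arg_cong[OF vec_expand])
  also have "\<dots> = (\<Sum>i\<in>UNIV. f (vscale (x i) (bvec i)))"
    by (rule clin_fun_sum[OF assms finite])
  finally show ?thesis
    by (simp add: clin_fun_scale[OF assms])
qed

lemma antilin_expand:
  fixes f :: "('a::finite \<Rightarrow> complex) \<Rightarrow> ('b \<Rightarrow> complex)"
  assumes "antilin f" shows "f x j = (\<Sum>i\<in>UNIV. cnj (x i) * f (bvec i) j)"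
proof -
  have "f x = f (\<lambda>j. \<Sum>i\<in>UNIV. vscale (x i) (bvec i) j)"
    by (rule arg_cong[OF vec_expand])
  also have "\<dots> = (\<lambda>j. \<Sum>i\<in>UNIV. f (vscale (x i) (bvec i)) j)"
    by (rule antilin_sum[OF assms finite])
  finally show ?thesis
    by (simp add: antilin_scale[OF assms]) (simp add: vscale_def)
qed

lemma bilin_expand:
  fixes m :: "('a::finite \<Rightarrow> complex) \<Rightarrow> ('a \<Rightarrow> complex) \<Rightarrow> ('a \<Rightarrow> complex)"
  assumes "bilin m"
  shows "m x y c = (\<Sum>a\<in>UNIV. \<Sum>b\<in>UNIV. x a * y b * m (bvec a) (bvec b) c)"
proof -
  have "clin (\<lambda>x. m x y)" "\<And>a. clin (m (bvec a))"
    using assms by (simp_all add: bilin_def)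
  then show ?thesis
    by (simp add: clin_expand[of "\<lambda>x. m x y" x] clin_expand[of "m (bvec _)" y] sum_distrib_left mult.assoc)
qed

lemma clin_eqI:
  fixes f g :: "('a::finite \<Rightarrow> complex) \<Rightarrow> ('b \<Rightarrow> complex)"
  assumes "clin f" "clin g" "\<And>i. f (bvec i) = g (bvec i)"
  shows "f x = g x"
  using clin_expand[OF assms(1), of x] clin_expand[OF assms(2), of x] assms(3) by auto

lemma clin_fun_eqI:
  fixes f g :: "('a::finite \<Rightarrow> complex) \<Rightarrow> complex"
  assumes "clin_fun f" "clin_fun g" "\<And>i. f (bvec i) = g (bvec i)"
  shows "f x = g x"
  using clin_fun_expand[OF assms(1), of x] clin_fun_expand[OF assms(2), of x] assms(3) by simp

lemma clin_eq_on_tens: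
  fixes f g :: "('a::finite \<times> 'b::finite \<Rightarrow> complex) \<Rightarrow> ('c \<Rightarrow> complex)"
  assumes "clin f" "clin g" "\<And>a b. f (tens (bvec a) (bvec b)) = g (tens (bvec a) (bvec b))"
  shows "f x = g x"
proof (rule clin_eqI[OF assms(1,2)])
  show "f (bvec i) = g (bvec i)" for i
    using assms(3) by (cases i) (simp add: bvec_pair)
qed

lemma clin_fun_eq_on_tens:
  fixes f g :: "('a::finite \<times> 'b::finite \<Rightarrow> complex) \<Rightarrow> complex"
  assumes "clin_fun f" "clin_fun g" "\<And>a b. f (tens (bvec a) (bvec b)) = g (tens (bvec a) (bvec b))"
  shows "f x = g x"
proof (rule clin_fun_eqI[OF assms(1,2)])
  show "f (bvec i) = g (bvec i)" for i
    using assms(3) by (cases i) (simp add: bvec_pair)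
qed

lemma clin_inj_imp_surj:
  fixes f :: "('i::finite \<Rightarrow> complex) \<Rightarrow> ('i \<Rightarrow> complex)"
  assumes f: "clin f" and "inj f"
  shows "surj f"
proof -
  define F where "F v = vec_lambda (f (vec_nth v))" for v :: "complex^'i"
  have "linear F"
  proof
    show "F (x + y) = F x + F y" for x y
    proof -
      have "vec_nth (x + y) = vadd (vec_nth x) (vec_nth y)"
        by (auto simp: vadd_def)
      then show ?thesis
        by (simp add: F_def clin_add[OF f] vec_eq_iff) (simp add: vadd_def)
    qed
    show "F (r *\<^sub>R x) = r *\<^sub>R F x" for r x
    proof -
      have "vec_nth (r *\<^sub>R x) = vscale (of_real r) (vec_nth x)"
        unfolding vscale_def by (rule ext, subst vector_scaleR_component) (simp add: scaleR_conv_of_real)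
      then show ?thesis
        by (simp add: F_def clin_scale[OF f] vec_eq_iff) (simp add: vscale_def scaleR_conv_of_real)
    qed
  qed
  moreover have "inj F"
    using \<open>inj f\<close> by (auto simp: F_def inj_def vec_eq_iff fun_eq_iff)
  ultimately have "surj F"
    by (simp add: linear_inj_imp_surj)
  have "y \<in> range f" for y
  proof -
    obtain x where "vec_lambda y = F x"
      using surjD[OF \<open>surj F\<close>] by blast
    then have "y = f (vec_nth x)"
      by (simp add: F_def vec_eq_iff fun_eq_iff)
    then show ?thesis by blast
  qed
  then show ?thesis by blast
qed

lemma tmul_tens:
  assumes m: "bilin m" and n: "bilin n"
  shows "tmul m n (tens a b) (tens c d) = tens (m a c) (n b d)"
proof (rule ext, clarify)
  fix p q
  have "tens (m a c) (n b d) (p, q) =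
      (\<Sum>i\<in>UNIV. \<Sum>i'\<in>UNIV. a i * c i' * m (bvec i) (bvec i') p) *
      (\<Sum>j\<in>UNIV. \<Sum>j'\<in>UNIV. b j * d j' * n (bvec j) (bvec j') q)"
    by (simp add: bilin_expand[OF m, of a c p] bilin_expand[OF n, of b d q])
  also have "\<dots> = (\<Sum>i\<in>UNIV. \<Sum>j\<in>UNIV. \<Sum>i'\<in>UNIV. \<Sum>j'\<in>UNIV.
      (a i * c i' * m (bvec i) (bvec i') p) * (b j * d j' * n (bvec j) (bvec j') q))"
    by (simp only: sum_product)
  finally show "tmul m n (tens a b) (tens c d) (p, q) = tens (m a c) (n b d) (p, q)"
    by (simp add: tmul_def mult_ac)
qed

lemma clin_tmul_left: "clin (\<lambda>X. tmul m n X Y)"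
  by (rule clinI; rule ext;
      clarsimp simp: tmul_def vadd_def vscale_def ring_distribs sum.distrib sum_distrib_left mult.assoc)

lemma clin_tmul_right: "clin (\<lambda>Y. tmul m n X Y)"
  by (rule clinI; rule ext;
      clarsimp simp: tmul_def vadd_def vscale_def ring_distribs sum.distrib sum_distrib_left mult_ac)

lemma tmul_assoc:
  assumes m: "bilin m" and n: "bilin n"
    and m_assoc: "\<And>x y z. m (m x y) z = m x (m y z)" and n_assoc: "\<And>x y z. n (n x y) z = n x (n y z)"
  shows "tmul m n (tmul m n X Y) Z = tmul m n X (tmul m n Y Z)"
proof -
  have "tmul m n (tmul m n (tens a b) (tens c d)) Z = tmul m n (tens a b) (tmul m n (tens c d) Z)" for a b c d
    by (rule clin_eq_on_tens[OF clin_comp[OF clin_tmul_right clin_id] clin_comp[OF clin_tmul_right clin_tmul_right]])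
       (simp add: tmul_tens[OF m n] m_assoc n_assoc)
  then have "tmul m n (tmul m n (tens a b) Y) Z = tmul m n (tens a b) (tmul m n Y Z)" for a b
    by (rule clin_eq_on_tens[OF clin_comp[OF clin_tmul_left clin_tmul_right] clin_comp[OF clin_tmul_right clin_tmul_left]])
  then show ?thesis
    by (rule clin_eq_on_tens[OF clin_comp[OF clin_tmul_left clin_tmul_left] clin_tmul_left])
qed

lemma flip_tens: "flip (tens a b) = tens b a"
  by (auto simp: flip_def)

lemma flip_flip [simp]: "flip (flip X) = X"
  by (auto simp: flip_def)

lemma clin_flip: "clin flip"
  by (rule clinI; rule ext; auto simp: flip_def vadd_def vscale_def)

lemma flip_tmul:
  assumes m: "bilin m" and n: "bilin n"
  shows "flip (tmul m n X Y) = tmul n m (flip X) (flip Y)"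
proof -
  have "flip (tmul m n (tens a b) Y) = tmul n m (flip (tens a b)) (flip Y)" for a b
    by (rule clin_eq_on_tens[OF clin_comp[OF clin_flip clin_tmul_right] clin_comp[OF clin_tmul_right clin_flip]])
       (simp add: tmul_tens[OF m n] tmul_tens[OF n m] flip_tens)
  then show ?thesis
    by (rule clin_eq_on_tens[OF clin_comp[OF clin_flip clin_tmul_left] clin_comp[OF clin_tmul_left clin_flip]])
qed

lemma slice_tens:
  assumes "clin_fun \<theta>" shows "slice \<theta> (tens a b) = vscale (\<theta> b) a"
  using clin_fun_expand[OF assms, of b]
  by (simp add: slice_def vscale_def sum_distrib_left mult_ac fun_eq_iff)

lemma clin_slice: "clin (slice \<theta>)"
  by (rule clinI; rule ext;
      simp add: slice_def vadd_def vscale_def ring_distribs sum.distrib sum_distrib_left mult.assoc)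

lemma tmap_tens:
  assumes f: "clin f" and g: "clin g"
  shows "tmap f g (tens a b) = tens (f a) (g b)"
proof (rule ext, clarify)
  fix j l
  have "tens (f a) (g b) (j, l) = (\<Sum>i\<in>UNIV. a i * f (bvec i) j) * (\<Sum>k\<in>UNIV. b k * g (bvec k) l)"
    by (simp add: clin_expand[OF f, of a j] clin_expand[OF g, of b l])
  also have "\<dots> = (\<Sum>i\<in>UNIV. \<Sum>k\<in>UNIV. (a i * f (bvec i) j) * (b k * g (bvec k) l))"
    by (simp only: sum_product)
  finally show "tmap f g (tens a b) (j, l) = tens (f a) (g b) (j, l)"
    by (simp add: tmap_def mult_ac)
qed

lemma clin_tmap: "clin (tmap f g)"
  by (rule clinI; rule ext;
      clarsimp simp: tmap_def vadd_def vscale_def ring_distribs sum.distrib sum_distrib_left mult.assoc)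

lemma tmap_id_left_apply: "tmap id g X (j, l) = (\<Sum>k\<in>UNIV. X (j, k) * g (bvec k) l)"
proof -
  have "tmap id g X (j, l) = (\<Sum>k\<in>UNIV. \<Sum>i\<in>UNIV. (X (i, k) * g (bvec k) l) * bvec i j)"
    unfolding tmap_def by (subst sum.swap) (simp add: mult_ac)
  then show ?thesis by simp
qed

lemma tmap_id_right_apply: "tmap f id X (j, l) = (\<Sum>i\<in>UNIV. X (i, l) * f (bvec i) j)"
  by (simp add: tmap_def mult_ac)

lemma tmap_id_comp:
  assumes "clin g" shows "tmap id g (tmap id f X) = tmap id (\<lambda>z. g (f z)) X"
proof (rule ext, clarify)
  fix j l
  have "tmap id g (tmap id f X) (j, l) = (\<Sum>k\<in>UNIV. \<Sum>k'\<in>UNIV. X (j, k') * f (bvec k') k * g (bvec k) l)"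
    by (simp add: tmap_id_left_apply sum_distrib_right)
  also have "\<dots> = (\<Sum>k'\<in>UNIV. X (j, k') * (\<Sum>k\<in>UNIV. f (bvec k') k * g (bvec k) l))"
    by (subst sum.swap) (simp add: sum_distrib_left mult_ac)
  also have "\<dots> = tmap id (\<lambda>z. g (f z)) X (j, l)"
    by (simp add: tmap_id_left_apply clin_expand[OF assms, of "f (bvec _)" l])
  finally show "tmap id g (tmap id f X) (j, l) = tmap id (\<lambda>z. g (f z)) X (j, l)" .
qed

lemma tmap_antihom:
  assumes m: "bilin m" and f: "clin f" and f_mul: "\<And>x y. f (m x y) = m (f y) (f x)"
  shows "tmap f f (tmul m m X Y) = tmul m m (tmap f f Y) (tmap f f X)"
proof -
  have "tmap f f (tmul m m (tens a b) Y) = tmul m m (tmap f f Y) (tmap f f (tens a b))" for a b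
    by (rule clin_eq_on_tens[OF clin_comp[OF clin_tmap clin_tmul_right] clin_comp[OF clin_tmul_left clin_tmap]])
       (simp add: tmul_tens[OF m m] tmap_tens[OF f f] f_mul)
  then show ?thesis
    by (rule clin_eq_on_tens[OF clin_comp[OF clin_tmap clin_tmul_left] clin_comp[OF clin_tmul_right clin_tmap]])
qed

lemma slice_tmap_id:
  assumes "clin_fun \<theta>" shows "slice \<theta> (tmap id f X) = slice (\<lambda>z. \<theta> (f z)) X"
proof
  fix a
  have "slice \<theta> (tmap id f X) a = (\<Sum>l\<in>UNIV. \<Sum>k\<in>UNIV. X (a, k) * f (bvec k) l * \<theta> (bvec l))"
    by (simp add: slice_def tmap_id_left_apply sum_distrib_right)
  also have "\<dots> = (\<Sum>k\<in>UNIV. X (a, k) * (\<Sum>l\<in>UNIV. f (bvec k) l * \<theta> (bvec l)))"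
    by (subst sum.swap) (simp add: sum_distrib_left mult_ac)
  also have "\<dots> = slice (\<lambda>z. \<theta> (f z)) X a"
    by (simp add: slice_def clin_fun_expand[OF assms, of "f (bvec _)"])
  finally show "slice \<theta> (tmap id f X) a = slice (\<lambda>z. \<theta> (f z)) X a" .
qed

lemma slice_tmap_id_right:
  assumes "clin f" shows "slice \<theta> (tmap f id X) = f (slice \<theta> X)"
proof
  fix a
  have "slice \<theta> (tmap f id X) a = (\<Sum>l\<in>UNIV. \<Sum>i\<in>UNIV. X (i, l) * f (bvec i) a * \<theta> (bvec l))"
    by (simp add: slice_def tmap_id_right_apply sum_distrib_right)
  also have "\<dots> = (\<Sum>i\<in>UNIV. \<Sum>l\<in>UNIV. X (i, l) * f (bvec i) a * \<theta> (bvec l))"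
    by (rule sum.swap)
  also have "\<dots> = (\<Sum>i\<in>UNIV. (\<Sum>l\<in>UNIV. X (i, l) * \<theta> (bvec l)) * f (bvec i) a)"
    by (simp add: sum_distrib_left sum_distrib_right mult_ac)
  also have "\<dots> = f (slice \<theta> X) a"
    using clin_expand[OF assms, of "slice \<theta> X" a] by (simp add: slice_def)
  finally show "slice \<theta> (tmap f id X) a = f (slice \<theta> X) a" .
qed

lemma clin_mu: "clin (mu m)"
  by (rule clinI; rule ext;
      simp add: mu_def vadd_def vscale_def ring_distribs sum.distrib sum_distrib_left mult.assoc)

lemma mu_tmap_id:
  assumes "bilin m"
  shows "mu m (tmap id g X) = (\<lambda>c. \<Sum>a\<in>UNIV. \<Sum>k\<in>UNIV. X (a, k) * m (bvec a) (g (bvec k)) c)"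
proof -
  have "clin (m (bvec a))" for a
    using assms by (simp add: bilin_def)
  then have "m (bvec a) (g (bvec k)) c = (\<Sum>b\<in>UNIV. g (bvec k) b * m (bvec a) (bvec b) c)" for a k c
    by (rule clin_expand)
  moreover have "mu m (tmap id g X) c =
      (\<Sum>a\<in>UNIV. \<Sum>k\<in>UNIV. X (a, k) * (\<Sum>b\<in>UNIV. g (bvec k) b * m (bvec a) (bvec b) c))" for c
    unfolding mu_def tmap_id_left_apply sum_distrib_left sum_distrib_right
    by (rule sum.cong[OF refl], subst sum.swap) (simp add: mult_ac)
  ultimately show ?thesis by (simp add: fun_eq_iff)
qed

lemma antilin_tstar: "antilin (tstar s t)"
  unfolding antilin_def
  by (intro allI conjI; rule ext; clarsimp simp: tstar_def vadd_def vscale_def ring_distribs sum.distrib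
      sum_distrib_left mult.assoc)

lemma tstar_tens:
  assumes s: "antilin s" and t: "antilin t"
  shows "tstar s t (tens a b) = tens (s a) (t b)"
proof (rule ext, clarify)
  fix j l
  have "tens (s a) (t b) (j, l) = (\<Sum>i\<in>UNIV. cnj (a i) * s (bvec i) j) * (\<Sum>k\<in>UNIV. cnj (b k) * t (bvec k) l)"
    by (simp add: antilin_expand[OF s, of a j] antilin_expand[OF t, of b l])
  also have "\<dots> = (\<Sum>i\<in>UNIV. \<Sum>k\<in>UNIV. (cnj (a i) * s (bvec i) j) * (cnj (b k) * t (bvec k) l))"
    by (simp only: sum_product)
  finally show "tstar s t (tens a b) (j, l) = tens (s a) (t b) (j, l)"
    by (simp add: tstar_def mult_ac)
qed

locale pos_hermitian_form =
  fixes B :: "('i::finite \<Rightarrow> complex) \<Rightarrow> ('i \<Rightarrow> complex) \<Rightarrow> complex"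
  assumes add_right: "B u (vadd v v') = B u v + B u v'"
    and scale_right: "B u (vscale c v) = c * B u v"
    and hermitian: "B v u = cnj (B u v)"
    and nonneg: "0 \<le> Re (B u u)"
    and definite: "B u u = 0 \<Longrightarrow> u = vzero"
begin

lemma add_left: "B (vadd u u') v = B u v + B u' v"
  by (metis add_right hermitian complex_cnj_add)

lemma scale_left: "B (vscale c u) v = cnj c * B u v"
  by (metis scale_right hermitian complex_cnj_mult)

lemma Im_diag: "Im (B u u) = 0"
  using hermitian[of u u] by (metis Reals_cnj_iff complex_is_Real_iff)

lemma clin_fun_right: "clin_fun (B u)"
  by (simp add: clin_fun_def add_right scale_right)

lemma expand: "B u v = (\<Sum>a\<in>UNIV. \<Sum>c\<in>UNIV. cnj (u a) * v c * B (bvec a) (bvec c))"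
proof -
  have "B u (bvec c) = (\<Sum>a\<in>UNIV. cnj (u a) * B (bvec a) (bvec c))" for c
    using arg_cong[OF clin_fun_expand[OF clin_fun_right, of "bvec c" u], of cnj]
    by (simp add: hermitian[of u] hermitian[of "bvec _" "bvec c"])
  then show ?thesis
    by (simp add: clin_fun_expand[OF clin_fun_right, of u v] sum_distrib_left mult_ac) (rule sum.swap)
qed

lemma gram_factorization_step:
  assumes nz: "a k0 \<noteq> vzero"
  shows "\<exists>a' c. a' k0 = vzero \<and> (\<forall>k. a k = vzero \<longrightarrow> a' k = vzero) \<and>
           (\<forall>k l. B (a k) (a l) = B (a' k) (a' l) + cnj (c k) * c l)"
proof -
  define s where "s = sqrt (Re (B (a k0) (a k0)))"
  have "B (a k0) (a k0) \<noteq> 0"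
    using nz definite by blast
  then have "Re (B (a k0) (a k0)) > 0"
    using Im_diag nonneg by (metis complex_eqI less_eq_real_def zero_complex.simps)
  then have s_pos: "s > 0" and diag: "B (a k0) (a k0) = of_real s * of_real s"
    using Im_diag by (simp_all add: s_def complex_eq_iff)
  define u where "u = vscale (of_real (1 / s)) (a k0)"
  define c where "c k = B u (a k)" for k
  define a' where "a' k = vadd (a k) (vscale (- c k) u)" for k
  have Buu: "B u u = 1"
    using s_pos by (simp add: u_def scale_left scale_right diag)
  have "c k0 = of_real s"
    using s_pos by (simp add: c_def u_def scale_left diag)
  then have "a' k0 = vzero"
    using s_pos by (auto simp: a'_def u_def vadd_def vscale_def vzero_def)
  moreover have "a k = vzero \<longrightarrow> a' k = vzero" for k
    using scale_right[of u 0 vzero] by (auto simp: a'_def c_def vadd_def vscale_def vzero_def)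
  moreover have "B (a k) (a l) = B (a' k) (a' l) + cnj (c k) * c l" for k l
  proof -
    have a_split: "a k = vadd (a' k) (vscale (c k) u)" for k
      by (auto simp: a'_def vadd_def vscale_def)
    have orth: "B u (a' l) = 0" for l
      by (simp add: a'_def add_right scale_right Buu c_def)
    then have "B (a' k) u = 0" for k
      using hermitian[of "a' k" u] by simp
    with orth show ?thesis
      by (subst (1 2) a_split) (simp add: add_left add_right scale_left scale_right Buu)
  qed
  ultimately show ?thesis by blast
qed

lemma gram_factorization_card:
  fixes a :: "'k::finite \<Rightarrow> ('i \<Rightarrow> complex)"
  shows "card {k. a k \<noteq> vzero} \<le> n \<Longrightarrow> \<exists>(N::nat) C. \<forall>k l. B (a k) (a l) = (\<Sum>m<N. cnj (C m k) * C m l)"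
proof (induction n arbitrary: a)
  case 0
  then have "a k = vzero" for k by simp
  then show ?case
    using scale_right[of vzero 0 vzero] by (intro exI[of _ 0]) (simp add: vscale_def vzero_def)
next
  case (Suc n)
  show ?case
  proof (cases "\<forall>k. a k = vzero")
    case True
    then show ?thesis
      using scale_right[of vzero 0 vzero] by (intro exI[of _ 0]) (simp add: vscale_def vzero_def)
  next
    case False
    then obtain k0 where nz: "a k0 \<noteq> vzero" by blast
    obtain a' c where a'0: "a' k0 = vzero" and a'z: "\<forall>k. a k = vzero \<longrightarrow> a' k = vzero"
      and dec: "\<forall>k l. B (a k) (a l) = B (a' k) (a' l) + cnj (c k) * c l"
      using gram_factorization_step[of a k0, OF nz] by blast
    have "{k. a' k \<noteq> vzero} \<subseteq> {k. a k \<noteq> vzero} - {k0}"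
      using a'0 a'z by blast
    then have "card {k. a' k \<noteq> vzero} \<le> card ({k. a k \<noteq> vzero} - {k0})"
      by (rule card_mono[rotated]) simp
    also have "\<dots> \<le> n"
      using nz Suc.prems by simp
    finally obtain N :: nat and C where IH: "\<forall>k l. B (a' k) (a' l) = (\<Sum>m<N. cnj (C m k) * C m l)"
      using Suc.IH by blast
    define C' where "C' m = (if m < N then C m else c)" for m
    have "\<forall>k l. B (a k) (a l) = (\<Sum>m<Suc N. cnj (C' m k) * C' m l)"
      using dec IH by (simp add: C'_def)
    then show ?thesis by blast
  qed
qed

lemma gram_factorization:
  fixes a :: "'k::finite \<Rightarrow> ('i \<Rightarrow> complex)"
  shows "\<exists>(N::nat) C. \<forall>k l. B (a k) (a l) = (\<Sum>m<N. cnj (C m k) * C m l)"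
  by (rule gram_factorization_card[OF order_refl])

end

locale generalized_kac_algebra =
  fixes mul :: "('i::finite \<Rightarrow> complex) \<Rightarrow> ('i \<Rightarrow> complex) \<Rightarrow> ('i \<Rightarrow> complex)"
    and one :: "'i \<Rightarrow> complex"
    and st :: "('i \<Rightarrow> complex) \<Rightarrow> ('i \<Rightarrow> complex)"
    and Delta :: "('i \<Rightarrow> complex) \<Rightarrow> ('i \<times> 'i \<Rightarrow> complex)"
    and S :: "('i \<Rightarrow> complex) \<Rightarrow> ('i \<Rightarrow> complex)"
    and phi :: "('i \<Rightarrow> complex) \<Rightarrow> complex"
  assumes gen_kac: "gen_kac_algebra mul one st Delta S phi"
begin

abbreviation "tm \<equiv> tmul mul mul"

lemma bilin_mul: "bilin mul"
  and mul_assoc: "mul (mul x y) z = mul x (mul y z)"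
  and mul_one_left [simp]: "mul one x = x"
  and mul_one_right [simp]: "mul x one = x"
  and antilin_st: "antilin st"
  and st_st [simp]: "st (st x) = x"
  and st_mul: "st (mul x y) = mul (st y) (st x)"
  using gen_kac by (simp_all add: gen_kac_algebra_def fd_cstar_algebra_def star_algebra_def)

lemma clin_Delta: "clin Delta"
  and inj_Delta: "inj Delta"
  and Delta_mul: "Delta (mul x y) = tm (Delta x) (Delta y)"
  and Delta_st: "Delta (st x) = tstar st st (Delta x)"
  and coassoc: "tmap Delta id (Delta x) ((a, b), c) = tmap id Delta (Delta x) (a, (b, c))"
  and clin_S: "clin S"
  and S_one [simp]: "S one = one"
  and S_mul: "S (mul x y) = mul (S y) (S x)"
  and S_S [simp]: "S (S x) = x"
  and tmap_S_Delta: "tmap S S (Delta x) = flip (Delta (S x))"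
  and faithful_trace_phi: "faithful_trace mul st phi"
  and phi_S [simp]: "phi (S x) = phi x"
  and strong_invariance:
    "slice phi (tm (tens one y) (Delta x)) = S (slice phi (tm (Delta y) (tens one x)))"
  using gen_kac by (simp_all add: gen_kac_algebra_def)

lemma inj_S: "inj S"
  by (metis S_S injI)

lemma clin_fun_phi: "clin_fun phi"
  and phi_trace: "phi (mul x y) = phi (mul y x)"
  and phi_pos: "Im (phi (mul (st x) x)) = 0 \<and> Re (phi (mul (st x) x)) \<ge> 0"
  and phi_faithful: "phi (mul (st x) x) = 0 \<Longrightarrow> x = vzero"
  using faithful_trace_phi unfolding faithful_trace_def by blast+

lemma clin_mul_left: "clin (\<lambda>x. mul x y)"
  and clin_mul_right: "clin (mul x)"
  using bilin_mul by (simp_all add: bilin_def)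

lemma mul_vadd_left: "mul (vadd x x') y = vadd (mul x y) (mul x' y)"
  and mul_vadd_right: "mul x (vadd y y') = vadd (mul x y) (mul x y')"
  and mul_vscale_left: "mul (vscale c x) y = vscale c (mul x y)"
  and mul_vscale_right: "mul x (vscale c y) = vscale c (mul x y)"
  using clin_add[OF clin_mul_left] clin_add[OF clin_mul_right]
    clin_scale[OF clin_mul_left] clin_scale[OF clin_mul_right] by blast+

lemma phi_vadd: "phi (vadd x y) = phi x + phi y"
  and phi_vscale: "phi (vscale c x) = c * phi x"
  using clin_fun_add[OF clin_fun_phi] clin_fun_scale[OF clin_fun_phi] by blast+

lemma st_vadd: "st (vadd x y) = vadd (st x) (st y)"
  and st_vscale: "st (vscale c x) = vscale (cnj c) (st x)"
  using antilin_st by (simp_all add: antilin_def)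

lemma mul_vzero_left [simp]: "mul vzero y = vzero"
  using clin_zero[OF clin_mul_left] .

lemma mul_vzero_right [simp]: "mul x vzero = vzero"
  using clin_zero[OF clin_mul_right] .

lemma phi_vzero [simp]: "phi vzero = 0"
  using clin_fun_zero[OF clin_fun_phi] .

lemma Delta_vzero: "Delta vzero = vzero"
  using clin_zero[OF clin_Delta] .

lemma Delta_eq_vzero_iff: "Delta x = vzero \<longleftrightarrow> x = vzero"
  using inj_Delta Delta_vzero by (metis injD)

lemma st_one [simp]: "st one = one"
  using st_mul[of "st one" one] by simp

lemma clin_fun_phi_mul: "clin_fun (\<lambda>x. phi (mul w x))"
  by (rule clin_fun_comp[OF clin_fun_phi clin_mul_right])

lemma phi_nondegenerate: "(\<And>y. phi (mul z y) = 0) \<Longrightarrow> z = vzero"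
  using phi_faithful[of z] phi_trace[of z "st z"] by metis

lemma eq_if_phi_mul_eq:
  assumes "\<And>y. phi (mul z y) = phi (mul z' y)" shows "z = z'"
proof (rule eq_of_vadd_neg_eq_vzero, rule phi_nondegenerate)
  show "phi (mul (vadd z (vscale (-1) z')) y) = 0" for y
    using assms[of y] by (simp add: mul_vadd_left mul_vscale_left phi_vadd phi_vscale)
qed

lemma phi_S_mul_swap: "phi (mul (S a) x) = phi (mul (S x) a)"
  by (metis S_S S_mul phi_S)

lemma hermitian_if_real_on_squares:
  assumes f: "clin_fun f" and real: "\<And>x. Im (f (mul (st x) x)) = 0"
  shows "f (st x) = cnj (f x)"
proof -
  have f_mul_vadd: "f (mul (vadd a b) (vadd c d)) = f (mul a c) + f (mul a d) + f (mul b c) + f (mul b d)"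
    for a b c d by (simp add: mul_vadd_left mul_vadd_right clin_fun_add[OF f])
  have "Im (f one + f x + f (st x) + f (mul (st x) x)) = 0"
    using real[of "vadd one x"] by (simp add: st_vadd f_mul_vadd)
  moreover have "Im (f one + \<i> * f x - \<i> * f (st x) + f (mul (st x) x)) = 0"
    using real[of "vadd one (vscale \<i> x)"]
    by (simp add: st_vadd st_vscale f_mul_vadd mul_vscale_left mul_vscale_right clin_fun_scale[OF f])
  moreover have "Im (f one) = 0" "Im (f (mul (st x) x)) = 0"
    using real[of one] real[of x] by simp_all
  ultimately show ?thesis
    by (intro complex_eqI) auto
qed

lemma phi_st: "phi (st x) = cnj (phi x)"
  using hermitian_if_real_on_squares[OF clin_fun_phi] phi_pos by blast

lemma ex_phi_mul_eq:
  assumes "clin_fun f" shows "\<exists>z. f = (\<lambda>x. phi (mul z x))"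
proof -
  define R where "R a = (\<lambda>i. phi (mul a (bvec i)))" for a
  have "clin R"
  proof (rule clinI)
    show "R (vadd x y) = vadd (R x) (R y)" for x y
      by (simp add: R_def mul_vadd_left phi_vadd) (simp add: vadd_def)
    show "R (vscale c x) = vscale c (R x)" for c x
      by (simp add: R_def mul_vscale_left phi_vscale) (simp add: vscale_def)
  qed
  moreover have "inj R"
  proof (rule injI)
    fix a b assume "R a = R b"
    then have "phi (mul a (bvec i)) = phi (mul b (bvec i))" for i
      by (simp add: R_def fun_eq_iff)
    then have "phi (mul a y) = phi (mul b y)" for y
      by (rule clin_fun_eqI[OF clin_fun_phi_mul clin_fun_phi_mul])
    then show "a = b"
      by (rule eq_if_phi_mul_eq)
  qed
  ultimately have "surj R"
    by (rule clin_inj_imp_surj)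
  then obtain z where "(\<lambda>i. f (bvec i)) = R z"
    by (rule surjE)
  then have "f (bvec i) = phi (mul z (bvec i))" for i
    by (simp add: R_def fun_eq_iff)
  then have "f x = phi (mul z x)" for x
    by (rule clin_fun_eqI[OF assms clin_fun_phi_mul])
  then show ?thesis by auto
qed

definition central :: "('i \<Rightarrow> complex) \<Rightarrow> bool" where
  "central z \<longleftrightarrow> (\<forall>x. mul z x = mul x z)"

lemma central_if_phi_mul_trace:
  assumes "\<And>x y. phi (mul z (mul x y)) = phi (mul z (mul y x))"
  shows "central z"
  unfolding central_def
proof
  fix x
  show "mul z x = mul x z"
  proof (rule eq_if_phi_mul_eq)
    fix y
    have "phi (mul (mul z x) y) = phi (mul z (mul y x))"
      using assms by (simp add: mul_assoc)
    also have "\<dots> = phi (mul x (mul z y))"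
      using phi_trace[of "mul z y" x] by (simp add: mul_assoc)
    finally show "phi (mul (mul z x) y) = phi (mul (mul x z) y)"
      by (simp add: mul_assoc)
  qed
qed

lemma tm_tens: "tm (tens a b) (tens c d) = tens (mul a c) (mul b d)"
  by (rule tmul_tens[OF bilin_mul bilin_mul])

lemma tm_assoc: "tm (tm X Y) Z = tm X (tm Y Z)"
  by (rule tmul_assoc[OF bilin_mul bilin_mul]) (simp_all add: mul_assoc)

lemma tm_one_left [simp]: "tm (tens one one) X = X"
  by (rule clin_eq_on_tens[OF clin_tmul_right clin_id]) (simp add: tm_tens)

lemma tm_one_right [simp]: "tm X (tens one one) = X"
  by (rule clin_eq_on_tens[OF clin_tmul_left clin_id]) (simp add: tm_tens)

lemma tmap_S_tm: "tmap S S (tm X Y) = tm (tmap S S Y) (tmap S S X)"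
  by (rule tmap_antihom[OF bilin_mul clin_S]) (rule S_mul)

lemma central_tm_comm: "central z \<Longrightarrow> tm (tens one z) X = tm X (tens one z)"
  by (rule clin_eq_on_tens[OF clin_tmul_right clin_tmul_left]) (simp add: tm_tens central_def)

lemma tm_Delta_one_left: "tm (Delta one) (Delta x) = Delta x"
  using Delta_mul[of one x] by simp

lemma tm_Delta_one_right: "tm (Delta x) (Delta one) = Delta x"
  using Delta_mul[of x one] by simp

definition phi_slice :: "('i \<Rightarrow> complex) \<Rightarrow> ('i \<Rightarrow> complex)" where
  "phi_slice x = slice phi (Delta x)"

definition phi2 :: "('i \<times> 'i \<Rightarrow> complex) \<Rightarrow> complex" where
  "phi2 X = phi (slice phi X)"

lemma clin_fun_phi2: "clin_fun phi2"
  unfolding phi2_def[abs_def] by (rule clin_fun_comp[OF clin_fun_phi clin_slice])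

lemma slice_phi_tens: "slice phi (tens a b) = vscale (phi b) a"
  by (rule slice_tens[OF clin_fun_phi])

lemma phi2_tens: "phi2 (tens a b) = phi a * phi b"
  by (simp add: phi2_def slice_phi_tens phi_vscale mult.commute)

lemma slice_tm_tens_one: "slice phi (tm (tens a one) X) = mul a (slice phi X)"
  by (rule clin_eq_on_tens[OF clin_comp[OF clin_slice clin_tmul_right] clin_comp[OF clin_mul_right clin_slice]])
     (simp add: tm_tens slice_phi_tens mul_vscale_right)

lemma slice_tm_one_tens: "slice phi (tm (tens one w) X) = slice (\<lambda>z. phi (mul w z)) X"
  by (rule clin_eq_on_tens[OF clin_comp[OF clin_slice clin_tmul_right] clin_slice])
     (simp add: tm_tens slice_phi_tens slice_tens[OF clin_fun_phi_mul])

lemma phi_slice_eq_S_slice: "phi_slice x = S (slice phi (tm (Delta one) (tens one x)))"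
  using strong_invariance[of one x] by (simp add: phi_slice_def)

lemma S_phi_slice_one: "S (phi_slice one) = phi_slice one"
  using phi_slice_eq_S_slice[of one] by (simp add: phi_slice_def)

lemma slice_tm_one_tens_apply: "slice phi (tm X (tens one x)) a = phi (mul (\<lambda>b. X (a, b)) x)"
proof (rule clin_fun_eq_on_tens[of "\<lambda>X. slice phi (tm X (tens one x)) a" "\<lambda>X. phi (mul (\<lambda>b. X (a, b)) x)"])
  show "clin_fun (\<lambda>X. slice phi (tm X (tens one x)) a)"
    by (rule clin_fun_apply[OF clin_comp[OF clin_slice clin_tmul_left]])
  have "clin (\<lambda>X. \<lambda>b. X (a, b))"
    by (rule clinI) (auto simp: vadd_def vscale_def)
  then show "clin_fun (\<lambda>X. phi (mul (\<lambda>b. X (a, b)) x))"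
    by (rule clin_fun_comp[OF clin_fun_phi clin_comp[OF clin_mul_left]])
  fix i j :: 'i
  have "(\<lambda>b. bvec i a * bvec j b) = vscale (bvec i a) (bvec j)"
    by (simp add: vscale_def)
  then show "slice phi (tm (tens (bvec i) (bvec j)) (tens one x)) a =
      phi (mul (\<lambda>b. tens (bvec i) (bvec j) (a, b)) x)"
    by (simp add: tm_tens slice_phi_tens mul_vscale_left phi_vscale) (simp add: vscale_def)
qed

lemma tensor_eq_if_slices_eq:
  assumes "\<And>x. slice phi (tm X (tens one x)) = slice phi (tm Y (tens one x))"
  shows "X = Y"
proof (rule ext, clarify)
  fix a b
  have "(\<lambda>b. X (a, b)) = (\<lambda>b. Y (a, b))"
  proof (rule eq_if_phi_mul_eq)
    show "phi (mul (\<lambda>b. X (a, b)) x) = phi (mul (\<lambda>b. Y (a, b)) x)" for x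
      using fun_cong[OF assms[of x], of a] by (simp add: slice_tm_one_tens_apply)
  qed
  then show "X (a, b) = Y (a, b)" by (rule fun_cong)
qed

lemma Delta_slice:
  assumes "clin_fun \<theta>"
  shows "Delta (slice \<theta> (Delta x)) = tmap id (\<lambda>z. slice \<theta> (Delta z)) (Delta x)"
proof (rule ext, clarify)
  fix a b
  have coassoc_apply: "(\<Sum>i\<in>UNIV. Delta x (i, c) * Delta (bvec i) (a, b)) =
      (\<Sum>k\<in>UNIV. Delta x (a, k) * Delta (bvec k) (b, c))" for c
    using coassoc[of x a b c] by (simp add: tmap_id_left_apply tmap_id_right_apply)
  have "Delta (slice \<theta> (Delta x)) (a, b) = (\<Sum>i\<in>UNIV. \<Sum>c\<in>UNIV. \<theta> (bvec c) * (Delta x (i, c) * Delta (bvec i) (a, b)))"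
    using clin_expand[OF clin_Delta, of "slice \<theta> (Delta x)" "(a, b)"]
    by (simp add: slice_def sum_distrib_left sum_distrib_right mult_ac)
  also have "\<dots> = (\<Sum>c\<in>UNIV. \<theta> (bvec c) * (\<Sum>i\<in>UNIV. Delta x (i, c) * Delta (bvec i) (a, b)))"
    by (subst sum.swap) (simp add: sum_distrib_left)
  also have "\<dots> = (\<Sum>c\<in>UNIV. \<theta> (bvec c) * (\<Sum>k\<in>UNIV. Delta x (a, k) * Delta (bvec k) (b, c)))"
    by (simp only: coassoc_apply)
  also have "\<dots> = (\<Sum>k\<in>UNIV. Delta x (a, k) * (\<Sum>c\<in>UNIV. Delta (bvec k) (b, c) * \<theta> (bvec c)))"
    unfolding sum_distrib_left by (subst sum.swap) (simp add: mult_ac)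
  also have "\<dots> = tmap id (\<lambda>z. slice \<theta> (Delta z)) (Delta x) (a, b)"
    by (simp add: tmap_id_left_apply slice_def)
  finally show "Delta (slice \<theta> (Delta x)) (a, b) = tmap id (\<lambda>z. slice \<theta> (Delta z)) (Delta x) (a, b)" .
qed

lemma mu_tmap_slice_tm:
  "mu mul (tmap id (\<lambda>z. slice phi (tm W (tens one z))) X) = slice phi (tm X W)"
proof (rule clin_eq_on_tens[OF clin_comp[OF clin_mu clin_tmap] clin_comp[OF clin_slice clin_tmul_left]])
  fix i j :: 'i
  have "mul (bvec i) (slice phi (tm W (tens one (bvec j)))) = slice phi (tm (tens (bvec i) (bvec j)) W)"
    by (rule clin_eq_on_tens[OF clin_comp[OF clin_mul_right clin_comp[OF clin_slice clin_tmul_left]]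
          clin_comp[OF clin_slice clin_tmul_right]])
       (simp add: tm_tens slice_phi_tens mul_vscale_right phi_trace)
  then show "mu mul (tmap id (\<lambda>z. slice phi (tm W (tens one z))) (tens (bvec i) (bvec j))) =
      slice phi (tm (tens (bvec i) (bvec j)) W)"
    by (simp add: mu_tmap_id[OF bilin_mul] mult.assoc sum_distrib_left[symmetric])
qed

lemma eps_t_slice_tm_one_tens: "eps_t mul Delta S (slice phi (tm (tens one w) (Delta x))) = phi_slice (mul x w)"
proof -
  let ?\<theta> = "\<lambda>z. phi (mul w z)"
  have S_slice: "S (slice ?\<theta> (Delta z)) = slice phi (tm (Delta w) (tens one z))" for z
    using strong_invariance[of w z] by (simp add: slice_tm_one_tens)
  have "eps_t mul Delta S (slice ?\<theta> (Delta x)) =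
      mu mul (tmap id S (tmap id (\<lambda>z. slice ?\<theta> (Delta z)) (Delta x)))"
    by (simp add: eps_t_def Delta_slice[OF clin_fun_phi_mul])
  also have "\<dots> = mu mul (tmap id (\<lambda>z. slice phi (tm (Delta w) (tens one z))) (Delta x))"
    by (simp add: tmap_id_comp[OF clin_S] S_slice)
  also have "\<dots> = slice phi (tm (Delta x) (Delta w))"
    by (rule mu_tmap_slice_tm)
  finally show ?thesis
    by (simp add: slice_tm_one_tens phi_slice_def Delta_mul)
qed

lemma eps_t_phi_slice: "eps_t mul Delta S (phi_slice y) = phi_slice y"
  using eps_t_slice_tm_one_tens[of one y] by (simp add: phi_slice_def)

lemma phi2_tm_flip_tmap_S:
  "phi2 (tm (flip (tmap S S X)) (tens one x)) = phi2 (tm (tens (S x) one) X)"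
proof (rule clin_fun_eq_on_tens[of "\<lambda>X. phi2 (tm (flip (tmap S S X)) (tens one x))"])
  show "clin_fun (\<lambda>X. phi2 (tm (flip (tmap S S X)) (tens one x)))"
    by (rule clin_fun_comp[OF clin_fun_phi2 clin_comp[OF clin_tmul_left clin_comp[OF clin_flip clin_tmap]]])
  show "clin_fun (\<lambda>X. phi2 (tm (tens (S x) one) X))"
    by (rule clin_fun_comp[OF clin_fun_phi2 clin_tmul_right])
  show "phi2 (tm (flip (tmap S S (tens (bvec a) (bvec b)))) (tens one x)) =
      phi2 (tm (tens (S x) one) (tens (bvec a) (bvec b)))" for a b
    using phi_S_mul_swap[of "bvec a" x]
    by (simp add: tmap_tens[OF clin_S clin_S] flip_tens tm_tens phi2_tens mult.commute)
qed

lemma phi_mul_phi_slice_one: "phi (mul (phi_slice one) x) = phi2 (Delta x)"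
proof -
  have "phi2 (Delta x) = phi (slice phi (tm (Delta one) (tens one x)))"
    by (subst phi_S[symmetric]) (simp add: phi2_def phi_slice_eq_S_slice[symmetric] phi_slice_def)
  also have "\<dots> = phi2 (tm (flip (tmap S S (Delta one))) (tens one x))"
    by (simp add: tmap_S_Delta phi2_def)
  also have "\<dots> = phi (mul (S x) (phi_slice one))"
    by (subst phi2_tm_flip_tmap_S) (simp add: phi2_def slice_tm_tens_one phi_slice_def)
  also have "\<dots> = phi (mul (phi_slice one) x)"
    using phi_S_mul_swap[of x "phi_slice one"] by (simp add: S_phi_slice_one)
  finally show ?thesis ..
qed

lemma phi2_trace: "phi2 (tm X Y) = phi2 (tm Y X)"
proof -
  have "phi2 (tm (tens a b) Y) = phi2 (tm Y (tens a b))" for a b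
    by (rule clin_fun_eq_on_tens[OF clin_fun_comp[OF clin_fun_phi2 clin_tmul_right]
          clin_fun_comp[OF clin_fun_phi2 clin_tmul_left]])
       (simp add: tm_tens phi2_tens phi_trace)
  then show ?thesis
    by (rule clin_fun_eq_on_tens[OF clin_fun_comp[OF clin_fun_phi2 clin_tmul_left]
          clin_fun_comp[OF clin_fun_phi2 clin_tmul_right]])
qed

lemma central_phi_slice_one: "central (phi_slice one)"
proof (rule central_if_phi_mul_trace)
  show "phi (mul (phi_slice one) (mul x y)) = phi (mul (phi_slice one) (mul y x))" for x y
    using phi2_trace[of "Delta x" "Delta y"] by (simp add: phi_mul_phi_slice_one Delta_mul)
qed

lemma slice_tm_one_tens_phi_slice_one:
  "slice phi (tm (tens one (phi_slice one)) (Delta x)) = phi_slice (mul x (phi_slice one))"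
proof -
  have "slice phi (tm (tens one (phi_slice one)) (Delta x)) = slice (\<lambda>z. phi (phi_slice z)) (Delta x)"
    by (simp add: slice_tm_one_tens phi_mul_phi_slice_one) (simp add: phi2_def phi_slice_def)
  also have "\<dots> = slice phi (tmap id phi_slice (Delta x))"
    by (rule slice_tmap_id[OF clin_fun_phi, symmetric])
  also have "\<dots> = phi_slice (phi_slice x)"
    using Delta_slice[OF clin_fun_phi, of x] by (simp add: phi_slice_def[abs_def])
  finally have "slice phi (tm (tens one (phi_slice one)) (Delta x)) = phi_slice (phi_slice x)" .
  \<comment> \<open>The right-hand side is fixed by \<open>\<epsilon>\<^sub>t\<close>, and applying \<open>\<epsilon>\<^sub>t\<close> to the left-hand side gives
    \<open>phi_slice (mul x (phi_slice one))\<close>.\<close>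
  then show ?thesis
    using eps_t_slice_tm_one_tens[of "phi_slice one" x] eps_t_phi_slice[of "phi_slice x"] by simp
qed

lemma Delta_eq_tm_one_tens:
  assumes z: "central z"
    and slice_z: "\<And>x. slice phi (tm (tens one z) (Delta x)) = phi_slice (mul x z)"
  shows "Delta z = tm (Delta one) (tens one z)"
proof (rule tensor_eq_if_slices_eq)
  fix x
  have "S (slice phi (tm (Delta z) (tens one x))) = phi_slice (mul x z)"
    using strong_invariance[of z x] slice_z[of x] by simp
  also have "\<dots> = S (slice phi (tm (Delta one) (tm (tens one z) (tens one x))))"
    using z by (simp add: phi_slice_eq_S_slice tm_tens central_def)
  finally show "slice phi (tm (Delta z) (tens one x)) = slice phi (tm (tm (Delta one) (tens one z)) (tens one x))"
    unfolding tm_assoc by (rule injD[OF inj_S])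
qed

lemma Delta_eq_tm_tens_one:
  assumes "S z = z" and "Delta z = tm (Delta one) (tens one z)"
  shows "Delta z = tm (tens z one) (Delta one)"
proof -
  have "flip (Delta z) = tmap S S (Delta z)"
    using tmap_S_Delta[of z] \<open>S z = z\<close> by simp
  also have "\<dots> = tm (tens one z) (flip (Delta one))"
    by (simp add: assms tmap_S_tm tmap_tens[OF clin_S clin_S] tmap_S_Delta)
  finally have "flip (flip (Delta z)) = flip (tm (tens one z) (flip (Delta one)))"
    by (rule arg_cong[where f = flip])
  then show ?thesis
    by (simp add: flip_tmul[OF bilin_mul bilin_mul] flip_tens)
qed

lemma Delta_phi_slice_one: "Delta (phi_slice one) = tm (Delta one) (tens one (phi_slice one))"
  by (rule Delta_eq_tm_one_tens[OF central_phi_slice_one slice_tm_one_tens_phi_slice_one])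

definition phi_inner :: "('i \<Rightarrow> complex) \<Rightarrow> ('i \<Rightarrow> complex) \<Rightarrow> complex" where
  "phi_inner u v = phi (mul (st u) v)"

sublocale phi_inner: pos_hermitian_form phi_inner
proof
  show "phi_inner u (vadd v v') = phi_inner u v + phi_inner u v'" for u v v'
    by (simp add: phi_inner_def mul_vadd_right phi_vadd)
  show "phi_inner u (vscale c v) = c * phi_inner u v" for u c v
    by (simp add: phi_inner_def mul_vscale_right phi_vscale)
  show "phi_inner v u = cnj (phi_inner u v)" for u v
    using phi_st[of "mul (st u) v"] by (simp add: phi_inner_def st_mul)
  show "0 \<le> Re (phi_inner u u)" for u
    using phi_pos by (simp add: phi_inner_def)
  show "phi_inner u u = 0 \<Longrightarrow> u = vzero" for u
    using phi_faithful by (simp add: phi_inner_def)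
qed

lemma phi2_tm_tstar:
  "phi2 (tm (tstar st st Y) Y) =
    (\<Sum>b\<in>UNIV. \<Sum>d\<in>UNIV. phi_inner (\<lambda>a. Y (a, b)) (\<lambda>a. Y (a, d)) * phi_inner (bvec b) (bvec d))"
proof -
  let ?col = "\<lambda>b a. Y (a, b)"
  have Y_eq: "Y = (\<lambda>p. \<Sum>b\<in>UNIV. tens (?col b) (bvec b) p)"
    by (auto simp: fun_eq_iff)
  have "tstar st st Y = tstar st st (\<lambda>p. \<Sum>b\<in>UNIV. tens (?col b) (bvec b) p)"
    by (rule arg_cong[OF Y_eq])
  also have "\<dots> = (\<lambda>p. \<Sum>b\<in>UNIV. tens (st (?col b)) (st (bvec b)) p)"
    by (simp add: antilin_sum[OF antilin_tstar] tstar_tens[OF antilin_st antilin_st])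
  finally have "tm (tstar st st Y) Y =
      tm (\<lambda>p. \<Sum>b\<in>UNIV. tens (st (?col b)) (st (bvec b)) p) (\<lambda>p. \<Sum>d\<in>UNIV. tens (?col d) (bvec d) p)"
    using Y_eq by simp
  also have "\<dots> = (\<lambda>p. \<Sum>b\<in>UNIV. \<Sum>d\<in>UNIV. tens (mul (st (?col b)) (?col d)) (mul (st (bvec b)) (bvec d)) p)"
    by (simp add: clin_sum[OF clin_tmul_left] clin_sum[OF clin_tmul_right] tm_tens)
  finally show ?thesis
    by (simp add: clin_fun_sum[OF clin_fun_phi2] phi2_tens phi_inner_def)
qed

lemma phi2_tm_tstar_sum_squares:
  obtains N :: nat and C where "phi2 (tm (tstar st st Y) Y) = (\<Sum>m<N. phi_inner (C m) (C m))"
    and "(\<forall>m<N. C m = vzero) \<longrightarrow> Y = vzero"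
proof -
  let ?col = "\<lambda>b a. Y (a, b)"
  \<comment> \<open>Factoring the Gram matrix of the columns of \<open>Y\<close>, not that of the basis, makes the rows
    \<open>C m\<close> themselves the vectors whose squares appear.\<close>
  obtain N :: nat and C where gram: "\<And>b d. phi_inner (?col b) (?col d) = (\<Sum>m<N. cnj (C m b) * C m d)"
    using phi_inner.gram_factorization[of ?col] by blast
  have "phi2 (tm (tstar st st Y) Y) =
      (\<Sum>b\<in>UNIV. \<Sum>d\<in>UNIV. \<Sum>m<N. cnj (C m b) * C m d * phi_inner (bvec b) (bvec d))"
    by (simp add: phi2_tm_tstar gram sum_distrib_right)
  also have "\<dots> = (\<Sum>m<N. \<Sum>b\<in>UNIV. \<Sum>d\<in>UNIV. cnj (C m b) * C m d * phi_inner (bvec b) (bvec d))"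
    by (simp only: sum.swap[of _ UNIV "{..<N}"])
  also have "\<dots> = (\<Sum>m<N. phi_inner (C m) (C m))"
    by (simp add: phi_inner.expand[of "C _"])
  finally have sum_squares: "phi2 (tm (tstar st st Y) Y) = (\<Sum>m<N. phi_inner (C m) (C m))" .
  have zero: "(\<forall>m<N. C m = vzero) \<longrightarrow> Y = vzero"
  proof
    assume "\<forall>m<N. C m = vzero"
    have "phi_inner (?col b) (?col b) = 0" for b
      using \<open>\<forall>m<N. C m = vzero\<close> by (simp add: gram vzero_def)
    then have "?col b = vzero" for b
      by (rule phi_inner.definite)
    then show "Y = vzero"
      by (simp add: fun_eq_iff vzero_def)
  qed
  show ?thesis
    by (rule that[OF sum_squares zero])
qed

lemma phi2_tm_tstar_nonneg:
  shows "Im (phi2 (tm (tstar st st Y) Y)) = 0" and "0 \<le> Re (phi2 (tm (tstar st st Y) Y))"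
proof -
  obtain N :: nat and C where sum_squares: "phi2 (tm (tstar st st Y) Y) = (\<Sum>m<N. phi_inner (C m) (C m))"
    by (rule phi2_tm_tstar_sum_squares[of Y])
  show "Im (phi2 (tm (tstar st st Y) Y)) = 0"
    by (simp add: sum_squares phi_inner.Im_diag)
  show "0 \<le> Re (phi2 (tm (tstar st st Y) Y))"
    by (simp add: sum_squares phi_inner.nonneg sum_nonneg)
qed

lemma phi2_tm_tstar_eq_0:
  assumes "phi2 (tm (tstar st st Y) Y) = 0" shows "Y = vzero"
proof -
  obtain N :: nat and C where sum_squares: "phi2 (tm (tstar st st Y) Y) = (\<Sum>m<N. phi_inner (C m) (C m))"
    and zero: "(\<forall>m<N. C m = vzero) \<longrightarrow> Y = vzero"
    by (rule phi2_tm_tstar_sum_squares[of Y])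
  have "(\<Sum>m<N. Re (phi_inner (C m) (C m))) = 0"
    using assms by (simp add: sum_squares flip: Re_sum)
  then have "Re (phi_inner (C m) (C m)) = 0" if "m < N" for m
    using that by (simp add: sum_nonneg_eq_0_iff phi_inner.nonneg)
  then have "phi_inner (C m) (C m) = 0" if "m < N" for m
    using that phi_inner.Im_diag by (simp add: complex_eq_iff)
  then show ?thesis
    using zero phi_inner.definite by blast
qed

lemma phi_mul_phi_slice_one_square:
  "phi (mul (phi_slice one) (mul (st y) y)) = phi2 (tm (tstar st st (Delta y)) (Delta y))"
  by (simp add: phi_mul_phi_slice_one Delta_mul Delta_st)

lemma st_phi_slice_one: "st (phi_slice one) = phi_slice one"
proof (rule eq_if_phi_mul_eq)
  let ?g = "phi_slice one"
  have herm: "phi (mul ?g (st x)) = cnj (phi (mul ?g x))" for x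
    by (rule hermitian_if_real_on_squares[OF clin_fun_phi_mul])
       (simp add: phi_mul_phi_slice_one_square phi2_tm_tstar_nonneg)
  fix y
  have "phi (mul (st ?g) y) = cnj (phi (mul (st y) ?g))"
    using phi_st[of "mul (st y) ?g"] by (simp add: st_mul)
  also have "\<dots> = phi (mul ?g y)"
    using herm[of y] phi_trace[of "st y" ?g] by simp
  finally show "phi (mul (st ?g) y) = phi (mul ?g y)" .
qed

lemma phi_slice_one_mul_eq_vzero:
  assumes "mul (phi_slice one) z = vzero" shows "z = vzero"
proof -
  have "mul (phi_slice one) (mul (st z) z) = mul (mul (phi_slice one) (st z)) z"
    by (simp add: mul_assoc)
  also have "mul (phi_slice one) (st z) = mul (st z) (phi_slice one)"
    using central_phi_slice_one by (simp add: central_def)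
  also have "mul (mul (st z) (phi_slice one)) z = mul (st z) (mul (phi_slice one) z)"
    by (rule mul_assoc)
  finally have "phi2 (tm (tstar st st (Delta z)) (Delta z)) = 0"
    using assms by (simp add: phi_mul_phi_slice_one_square[symmetric])
  then show ?thesis
    using phi2_tm_tstar_eq_0 Delta_eq_vzero_iff by blast
qed

lemma ex_inverse_phi_slice_one: "\<exists>w. mul (phi_slice one) w = one"
proof -
  have "inj (mul (phi_slice one))"
  proof (rule injI)
    fix x y assume "mul (phi_slice one) x = mul (phi_slice one) y"
    then have "mul (phi_slice one) (vadd x (vscale (-1) y)) = vzero"
      by (simp add: mul_vadd_right mul_vscale_right) (simp add: vadd_def vscale_def vzero_def)
    then show "x = y"
      by (rule eq_of_vadd_neg_eq_vzero[OF phi_slice_one_mul_eq_vzero])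
  qed
  then have "surj (mul (phi_slice one))"
    by (rule clin_inj_imp_surj[OF clin_mul_right])
  then show ?thesis
    by (metis surjD)
qed

definition haar_density :: "'i \<Rightarrow> complex" where
  "haar_density = (SOME w. mul (phi_slice one) w = one)"

lemma phi_slice_one_mul_haar_density: "mul (phi_slice one) haar_density = one"
  unfolding haar_density_def using ex_inverse_phi_slice_one by (rule someI_ex)

lemma eq_haar_density_if_inverse:
  assumes "mul z (phi_slice one) = one" shows "z = haar_density"
proof -
  have "z = mul (mul z (phi_slice one)) haar_density"
    by (simp add: mul_assoc phi_slice_one_mul_haar_density)
  then show ?thesis
    by (simp add: assms)
qed

lemma haar_density_mul_phi_slice_one: "mul haar_density (phi_slice one) = one"
  using phi_slice_one_mul_haar_density central_phi_slice_one by (simp add: central_def)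

lemma central_haar_density: "central haar_density"
  unfolding central_def
proof
  fix x
  let ?g = "phi_slice one" and ?w = haar_density
  have "mul ?w x = mul ?w (mul (mul x ?g) ?w)"
    by (simp add: mul_assoc phi_slice_one_mul_haar_density)
  also have "mul x ?g = mul ?g x"
    using central_phi_slice_one by (simp add: central_def)
  also have "mul ?w (mul (mul ?g x) ?w) = mul (mul (mul ?w ?g) x) ?w"
    by (simp add: mul_assoc)
  also have "\<dots> = mul x ?w"
    by (simp add: haar_density_mul_phi_slice_one)
  finally show "mul ?w x = mul x ?w" .
qed

lemma S_haar_density: "S haar_density = haar_density"
proof (rule eq_haar_density_if_inverse)
  show "mul (S haar_density) (phi_slice one) = one"
    using arg_cong[OF phi_slice_one_mul_haar_density, of S] by (simp add: S_mul S_phi_slice_one)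
qed

lemma st_haar_density: "st haar_density = haar_density"
proof (rule eq_haar_density_if_inverse)
  show "mul (st haar_density) (phi_slice one) = one"
    using arg_cong[OF phi_slice_one_mul_haar_density, of st] by (simp add: st_mul st_phi_slice_one)
qed

lemma Delta_haar_density: "Delta haar_density = tm (Delta one) (tens one haar_density)"
proof -
  let ?g = "phi_slice one" and ?w = haar_density
  have "tm (Delta one) (tens one ?w) = tm (tm (Delta ?w) (Delta ?g)) (tens one ?w)"
    by (simp add: haar_density_mul_phi_slice_one flip: Delta_mul)
  also have "\<dots> = tm (Delta ?w) (tm (Delta one) (tm (tens one ?g) (tens one ?w)))"
    by (simp add: tm_assoc Delta_phi_slice_one)
  also have "\<dots> = Delta ?w"
    by (simp add: tm_tens phi_slice_one_mul_haar_density tm_Delta_one_right)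
  finally show ?thesis ..
qed

lemma slice_phi_mul_Delta:
  assumes "central z" and "Delta z = tm (Delta one) (tens one z)"
  shows "slice (\<lambda>x. phi (mul z x)) (Delta x) = phi_slice (mul z x)"
proof -
  have "slice (\<lambda>x. phi (mul z x)) (Delta x) = slice phi (tm (tens one z) (tm (Delta one) (Delta x)))"
    by (simp add: slice_tm_one_tens tm_Delta_one_left)
  also have "\<dots> = slice phi (tm (tm (tens one z) (Delta one)) (Delta x))"
    by (simp only: tm_assoc)
  also have "tm (tens one z) (Delta one) = Delta z"
    by (simp only: central_tm_comm[OF assms(1)] assms(2))
  finally show ?thesis
    by (simp add: phi_slice_def Delta_mul)
qed

lemma haar_invariant_phi_mul_iff:
  assumes "central z"
  shows "(\<forall>x. slice (\<lambda>x. phi (mul z x)) (Delta x) =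
            slice (\<lambda>x. phi (mul z x)) (tmap (eps_t mul Delta S) id (Delta x)))
    \<longleftrightarrow> Delta z = tm (Delta one) (tens one z)"
    (is "(\<forall>x. slice ?\<psi> (Delta x) = _) \<longleftrightarrow> _")
proof -
  have "clin (eps_t mul Delta S)"
    unfolding eps_t_def[abs_def] by (rule clin_comp[OF clin_mu clin_comp[OF clin_tmap clin_Delta]])
  then have slice_tmap_eps_t: "slice ?\<psi> (tmap (eps_t mul Delta S) id X) = eps_t mul Delta S (slice ?\<psi> X)" for X
    by (rule slice_tmap_id_right)
  show ?thesis
  proof
    assume invariant: "\<forall>x. slice ?\<psi> (Delta x) = slice ?\<psi> (tmap (eps_t mul Delta S) id (Delta x))"
    show "Delta z = tm (Delta one) (tens one z)"
    proof (rule Delta_eq_tm_one_tens[OF assms])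
      fix x
      have "slice ?\<psi> (Delta x) = eps_t mul Delta S (slice ?\<psi> (Delta x))"
        using invariant[rule_format, of x] unfolding slice_tmap_eps_t .
      then have "slice phi (tm (tens one z) (Delta x)) = eps_t mul Delta S (slice phi (tm (tens one z) (Delta x)))"
        unfolding slice_tm_one_tens .
      then show "slice phi (tm (tens one z) (Delta x)) = phi_slice (mul x z)"
        by (simp add: eps_t_slice_tm_one_tens)
    qed
  next
    assume "Delta z = tm (Delta one) (tens one z)"
    then have "slice ?\<psi> (Delta x) = phi_slice (mul z x)" for x
      by (rule slice_phi_mul_Delta[OF assms])
    then show "\<forall>x. slice ?\<psi> (Delta x) = slice ?\<psi> (tmap (eps_t mul Delta S) id (Delta x))"
      by (simp only: slice_tmap_eps_t eps_t_phi_slice simp_thms)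
  qed
qed

lemma slice_phi_mul_Delta_one:
  assumes "central z" "S z = z" "Delta z = tm (Delta one) (tens one z)"
  shows "slice (\<lambda>x. phi (mul z x)) (Delta one) = mul z (phi_slice one)"
proof -
  have "slice (\<lambda>x. phi (mul z x)) (Delta one) = slice phi (tm (tens one z) (Delta one))"
    by (simp add: slice_tm_one_tens)
  also have "tm (tens one z) (Delta one) = Delta z"
    by (simp only: central_tm_comm[OF assms(1)] assms(3))
  also have "\<dots> = tm (tens z one) (Delta one)"
    by (rule Delta_eq_tm_tens_one[OF assms(2,3)])
  finally show ?thesis
    by (simp add: slice_tm_tens_one phi_slice_def)
qed

lemma normalized_haar_trace_phi_mul_iff:
  assumes "central z" "S z = z"
  shows "normalized_haar_trace mul one st Delta S (\<lambda>x. phi (mul z x)) \<longleftrightarrow>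
    faithful_trace mul st (\<lambda>x. phi (mul z x)) \<and> Delta z = tm (Delta one) (tens one z) \<and>
    mul z (phi_slice one) = one"
proof -
  have "phi (mul z (S x)) = phi (mul z x)" for x
  proof -
    have "phi (mul z (S x)) = phi (S (mul x z))"
      by (simp add: S_mul assms(2))
    then show ?thesis
      using assms(1) by (simp add: central_def)
  qed
  then show ?thesis
    unfolding normalized_haar_trace_def haar_invariant_phi_mul_iff[OF assms(1)]
    using slice_phi_mul_Delta_one[OF assms] by auto
qed

lemma faithful_trace_phi_mul_haar_density: "faithful_trace mul st (\<lambda>x. phi (mul haar_density x))"
proof -
  let ?w = haar_density
  have comm: "mul ?w x = mul x ?w" for x
    using central_haar_density by (simp add: central_def)
  have square: "phi (mul ?w (mul (st x) x)) = phi2 (tm (tstar st st (Delta (mul x ?w))) (Delta (mul x ?w)))" for x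
  proof -
    have "mul (phi_slice one) (mul (st (mul x ?w)) (mul x ?w)) = mul (mul (phi_slice one) ?w) (mul (st x) (mul x ?w))"
      by (simp add: st_mul st_haar_density mul_assoc)
    also have "\<dots> = mul (mul (st x) x) ?w"
      by (simp add: phi_slice_one_mul_haar_density mul_assoc)
    finally show ?thesis
      by (simp add: phi_mul_phi_slice_one_square[symmetric] comm)
  qed
  show ?thesis
    unfolding faithful_trace_def
  proof (intro conjI allI impI)
    show "clin_fun (\<lambda>x. phi (mul ?w x))"
      by (rule clin_fun_phi_mul)
  next
    fix x y
    have "phi (mul ?w (mul x y)) = phi (mul y (mul ?w x))"
      using phi_trace[of "mul ?w x" y] by (simp add: mul_assoc)
    also have "\<dots> = phi (mul ?w (mul y x))"
      by (simp only: mul_assoc[symmetric] comm[of y, symmetric])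
    finally show "phi (mul ?w (mul x y)) = phi (mul ?w (mul y x))" .
  next
    fix x
    show "Im (phi (mul ?w (mul (st x) x))) = 0" "0 \<le> Re (phi (mul ?w (mul (st x) x)))"
      by (simp_all add: square phi2_tm_tstar_nonneg)
  next
    fix x
    assume "phi (mul ?w (mul (st x) x)) = 0"
    then have "Delta (mul x ?w) = vzero"
      by (intro phi2_tm_tstar_eq_0) (simp add: square)
    then have "mul x ?w = vzero"
      by (simp add: Delta_eq_vzero_iff)
    then have "mul (mul x ?w) (phi_slice one) = vzero"
      by simp
    then show "x = vzero"
      by (simp add: mul_assoc haar_density_mul_phi_slice_one)
  qed
qed

lemma normalized_haar_trace_haar_density:
  "normalized_haar_trace mul one st Delta S (\<lambda>x. phi (mul haar_density x))"
  using normalized_haar_trace_phi_mul_iff[OF central_haar_density S_haar_density]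
    faithful_trace_phi_mul_haar_density Delta_haar_density haar_density_mul_phi_slice_one
  by blast

lemma normalized_haar_trace_unique:
  assumes "normalized_haar_trace mul one st Delta S \<psi>"
  shows "\<psi> = (\<lambda>x. phi (mul haar_density x))"
proof -
  have ft: "faithful_trace mul st \<psi>" and S_inv: "\<And>x. \<psi> (S x) = \<psi> x"
    using assms by (simp_all add: normalized_haar_trace_def)
  have "clin_fun \<psi>"
    using ft by (simp add: faithful_trace_def)
  then obtain z where \<psi>: "\<psi> = (\<lambda>x. phi (mul z x))"
    using ex_phi_mul_eq by blast
  have "central z"
    using ft by (intro central_if_phi_mul_trace) (simp add: \<psi> faithful_trace_def)
  moreover have "S z = z"
  proof (rule eq_if_phi_mul_eq)
    fix y
    have "phi (mul (S z) y) = phi (mul (S y) z)"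
      by (rule phi_S_mul_swap)
    also have "\<dots> = phi (mul z (S y))"
      by (rule phi_trace)
    also have "\<dots> = phi (mul z y)"
      using S_inv[of y] by (simp add: \<psi>)
    finally show "phi (mul (S z) y) = phi (mul z y)" .
  qed
  ultimately have "mul z (phi_slice one) = one"
    using assms normalized_haar_trace_phi_mul_iff by (simp add: \<psi>)
  then have "z = haar_density"
    by (rule eq_haar_density_if_inverse)
  then show ?thesis
    by (simp add: \<psi>)
qed

end

theorem corollary2p5p2:
  fixes mul :: "('i::finite \<Rightarrow> complex) \<Rightarrow> ('i \<Rightarrow> complex) \<Rightarrow> ('i \<Rightarrow> complex)"
    and one :: "'i \<Rightarrow> complex"
    and st :: "('i \<Rightarrow> complex) \<Rightarrow> ('i \<Rightarrow> complex)"
    and Delta :: "('i \<Rightarrow> complex) \<Rightarrow> ('i \<times> 'i \<Rightarrow> complex)"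
    and S :: "('i \<Rightarrow> complex) \<Rightarrow> ('i \<Rightarrow> complex)"
    and phi :: "('i \<Rightarrow> complex) \<Rightarrow> complex"
  assumes "gen_kac_algebra mul one st Delta S phi"
  shows "\<exists>!psi. normalized_haar_trace mul one st Delta S psi"
proof -
  interpret generalized_kac_algebra mul one st Delta S phi
    by (rule generalized_kac_algebra.intro) (rule assms)
  show ?thesis
    using normalized_haar_trace_haar_density normalized_haar_trace_unique by blast
qed

end
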